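(* For all integers $s\ge 3$, the total size $h(s)$ of all $(s,s+1,s+2)$-core partitions satisfies the recurrence $$(2-s)h(s)+(2s-1)h(s-1)+(3s+3)h(s-2)=0.$$
   Context: A partition is an $(s,s+1,s+2)$-core if no hook length of a box of its Young diagram is divisible by $s$, $s+1$ or $s+2$. $h(s)$ denotes the sum of the sizes of all $(s,s+1,s+2)$-core partitions, with $h(1)=0$, $h(2)=1$. *)

theory Defs
  imports Main
begin

definition is_partition :: "nat list \<Rightarrow> bool" where
  "is_partition la \<longleftrightarrow> sorted_wrt (\<ge>) la \<and> (\<forall>x\<in>set la. 0 < x)"

definition psize :: "nat list \<Rightarrow> nat" where
  "psize la = sum_list la"

definition conj_part :: "nat list \<Rightarrow> nat \<Rightarrow> nat" where
  "conj_part la j = length (filter (\<lambda>x. j < x) la)"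

definition boxes :: "nat list \<Rightarrow> (nat \<times> nat) set" where
  "boxes la = {(i, j). i < length la \<and> j < la ! i}"

text \<open>Hook length of box (i,j): arm + leg + 1.\<close>
definition hook :: "nat list \<Rightarrow> nat \<Rightarrow> nat \<Rightarrow> nat" where
  "hook la i j = (la ! i - j - 1) + (conj_part la j - i - 1) + 1"

definition is_core3 :: "nat \<Rightarrow> nat list \<Rightarrow> bool" where
  "is_core3 s la \<longleftrightarrow> is_partition la \<and>
     (\<forall>(i, j)\<in>boxes la. \<not> s dvd hook la i j \<and> \<not> (s + 1) dvd hook la i j
                        \<and> \<not> (s + 2) dvd hook la i j)"

definition h :: "nat \<Rightarrow> nat" where
  "h s = (\<Sum>la\<in>{la. is_core3 s la}. psize la)"

end

theory Submission
  imports Defs "HOL-Computational_Algebra.Formal_Power_Series"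
begin

text \<open>A partition is determined by its beta set (the hook lengths of its first column), and it is an
  (s, s+1, s+2)-core iff its beta set avoids 0 and is closed under subtracting s, s+1 and s+2.
  Writing numbers as q(s+2) + p, such sets become sets of cells (q, p) with 1 \<le> p, p + 2q < s that
  contain the three cells below each of their cells, and these are exactly the cell sets of the
  Motzkin paths of length s. Twice the size of the core is then a statistic of the path with a
  recursion along the decomposition of Motzkin paths, so its generating function F is algebraic
  over the Motzkin series: (1 - 2x - 3x^2)^3 F = 2x^2 R with R^2 = 1 - 2x - 3x^2. Hence
  x (1 - 2x - 3x^2) F' = (2 + x + 9x^2) F, and comparing coefficients gives the recurrence.\<close>

section \<open>Beta sets of partitions\<close>

text \<open>beta_num la i is the hook length of the first box of row i.\<close>

definition beta_num :: "nat list \<Rightarrow> nat \<Rightarrow> nat" where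
  "beta_num la i = la ! i + (length la - 1 - i)"

definition beta :: "nat list \<Rightarrow> nat set" where
  "beta la = beta_num la ` {..<length la}"

lemma partition_nth_antimono:
  assumes "is_partition la" "i \<le> j" "j < length la"
  shows "la ! j \<le> la ! i"
  using assms sorted_wrt_nth_less[of "(\<ge>)" la i j] unfolding is_partition_def
  by (cases "i = j") auto

lemma partition_nth_pos: "is_partition la \<Longrightarrow> i < length la \<Longrightarrow> 0 < la ! i"
  unfolding is_partition_def using nth_mem by blast

lemma beta_num_strict_antimono:
  "is_partition la \<Longrightarrow> i < j \<Longrightarrow> j < length la \<Longrightarrow> beta_num la j < beta_num la i"
  using partition_nth_antimono[of la i j] unfolding beta_num_def by simp

lemma beta_num_ge: "is_partition la \<Longrightarrow> i < length la \<Longrightarrow> length la - i \<le> beta_num la i"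
  using partition_nth_pos[of la i] unfolding beta_num_def by simp

lemma inj_on_beta_num: "is_partition la \<Longrightarrow> inj_on (beta_num la) {..<length la}"
  by (rule inj_onI) (metis beta_num_strict_antimono lessThan_iff less_irrefl linorder_neqE_nat)

lemma card_beta: "is_partition la \<Longrightarrow> card (beta la) = length la"
  unfolding beta_def by (simp add: card_image inj_on_beta_num)

lemma finite_beta: "finite (beta la)"
  unfolding beta_def by simp

lemma zero_notin_beta: "is_partition la \<Longrightarrow> 0 \<notin> beta la"
  unfolding beta_def beta_num_def using partition_nth_pos by fastforce

lemma down_closed_eq_lessThan_card:
  fixes S :: "nat set"
  assumes "finite S" and down: "\<And>k k'. k \<in> S \<Longrightarrow> k' \<le> k \<Longrightarrow> k' \<in> S"
  shows "S = {..<card S}"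
proof -
  obtain m where "m \<notin> S" using assms(1) by (meson ex_new_if_finite infinite_UNIV_nat)
  define n where "n = (LEAST k. k \<notin> S)"
  have "n \<notin> S" unfolding n_def by (rule LeastI) fact
  moreover have "\<And>k. k < n \<Longrightarrow> k \<in> S" unfolding n_def using not_less_Least by blast
  moreover have "k < n" if "k \<in> S" for k using down[OF that, of n] \<open>n \<notin> S\<close> by (cases "k < n") auto
  ultimately have "S = {..<n}" by auto
  then show ?thesis by simp
qed

lemma conj_part_le_length: "conj_part la j \<le> length la"
  unfolding conj_part_def by simp

lemma conj_part_eq_card: "conj_part la j = card {k. k < length la \<and> j < la ! k}"
  unfolding conj_part_def length_filter_conv_card ..

lemma less_nth_iff_less_conj_part:
  assumes "is_partition la" "k < length la"
  shows "j < la ! k \<longleftrightarrow> k < conj_part la j"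
proof -
  define S where "S = {k. k < length la \<and> j < la ! k}"
  have "S = {..<card S}"
  proof (rule down_closed_eq_lessThan_card)
    fix k k' assume "k \<in> S" "k' \<le> k"
    then show "k' \<in> S" unfolding S_def using partition_nth_antimono[OF assms(1), of k' k] by auto
  qed (simp add: S_def)
  then show ?thesis using assms(2) unfolding conj_part_eq_card S_def[symmetric] by (auto simp: S_def)
qed

lemma conj_part_eqI:
  assumes "\<And>k. k < length la \<Longrightarrow> j < la ! k \<longleftrightarrow> k < c" "c \<le> length la"
  shows "conj_part la j = c"
proof -
  have "{k. k < length la \<and> j < la ! k} = {..<c}" using assms by auto
  then show ?thesis unfolding conj_part_eq_card by simp
qed

text \<open>The hook lengths of a partition are the differences x - y with x in its beta set and
  y < x outside it. For the box (i, j) the pair is beta_num la i and l + j - la'_j, where l is the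
  number of parts and la' the conjugate partition.\<close>

lemma hook_add_gap_eq_beta_num:
  assumes "is_partition la" "(i, j) \<in> boxes la"
  shows "hook la i j + (length la + j - conj_part la j) = beta_num la i"
proof -
  have "i < length la" "j < la ! i" using assms(2) unfolding boxes_def by auto
  then have "i < conj_part la j" using less_nth_iff_less_conj_part[OF assms(1)] by blast
  then show ?thesis
    using \<open>j < la ! i\<close> conj_part_le_length[of la j] unfolding hook_def beta_num_def by simp
qed

lemma gap_notin_beta:
  assumes "is_partition la"
  shows "length la + j - conj_part la j \<notin> beta la"
proof
  let ?l = "length la" and ?c = "conj_part la j"
  assume "?l + j - ?c \<in> beta la"
  then obtain k where k: "k < ?l" "beta_num la k = ?l + j - ?c" unfolding beta_def by auto
  have "?c \<le> ?l" by (rule conj_part_le_length)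
  moreover have "j < la ! k \<longleftrightarrow> k < ?c" using less_nth_iff_less_conj_part[OF assms k(1)] .
  ultimately show False using k unfolding beta_num_def by (cases "k < ?c") auto
qed

lemma beta_gap_index:
  assumes P: "is_partition la"
  obtains c where "c \<le> length la" "\<And>k. k < length la \<Longrightarrow> y < beta_num la k \<longleftrightarrow> k < c"
proof -
  define S where "S = {k. k < length la \<and> y < beta_num la k}"
  have "S = {..<card S}"
  proof (rule down_closed_eq_lessThan_card)
    fix k k' assume "k \<in> S" "k' \<le> k"
    then show "k' \<in> S" unfolding S_def using beta_num_strict_antimono[OF P, of k' k]
      by (cases "k' = k") auto
  qed (simp add: S_def)
  moreover have "card S \<le> length la" using card_mono[of "{..<length la}" S] by (auto simp: S_def)
  ultimately show thesis using that[of "card S"] unfolding S_def by blast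
qed

lemma conj_part_at_beta_gap:
  assumes P: "is_partition la" and y: "y \<notin> beta la" and c: "0 < c" "c \<le> length la"
    and above: "\<And>k. k < length la \<Longrightarrow> y < beta_num la k \<longleftrightarrow> k < c"
  shows "length la \<le> y + c" and "conj_part la (y + c - length la) = c"
proof -
  let ?l = "length la"
  have below: "beta_num la k < y" if "c \<le> k" "k < ?l" for k
    using above[of k] y that unfolding beta_def by (auto simp: not_less order.order_iff_strict)
  show "?l \<le> y + c"
  proof (cases "c < ?l")
    case True
    then show ?thesis using below[of c] beta_num_ge[OF P True] by simp
  qed (use c in simp)
  then show "conj_part la (y + c - ?l) = c"
  proof (intro conj_part_eqI[OF _ c(2)] iffI)
    fix k assume "k < ?l" "k < c"
    have "y < beta_num la (c - 1)" using above c by simp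
    then have "y + c - ?l < la ! (c - 1)" unfolding beta_num_def using c \<open>?l \<le> y + c\<close> by simp
    also have "\<dots> \<le> la ! k" using partition_nth_antimono[OF P, of k "c - 1"] \<open>k < c\<close> c by simp
    finally show "y + c - ?l < la ! k" .
  next
    fix k assume "k < ?l" "y + c - ?l < la ! k"
    show "k < c"
    proof (rule ccontr)
      assume "\<not> k < c"
      then have "la ! k \<le> la ! c" "beta_num la c < y"
        using partition_nth_antimono[OF P, of c k] below[of c] \<open>k < ?l\<close> by auto
      then show False using \<open>y + c - ?l < la ! k\<close> \<open>?l \<le> y + c\<close> unfolding beta_num_def by simp
    qed
  qed
qed

lemma hook_of_beta_gap:
  assumes P: "is_partition la" and x: "x \<in> beta la" and y: "y \<notin> beta la" "y < x"
  shows "\<exists>i j. (i, j) \<in> boxes la \<and> hook la i j = x - y"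
proof -
  let ?l = "length la"
  obtain i where i: "i < ?l" "x = beta_num la i" using x unfolding beta_def by auto
  obtain c where c: "c \<le> ?l" and above: "\<And>k. k < ?l \<Longrightarrow> y < beta_num la k \<longleftrightarrow> k < c"
    using beta_gap_index[OF P] by blast
  have "i < c" using above i y(2) by simp
  define j where "j = y + c - ?l"
  note gap = conj_part_at_beta_gap[OF P y(1) _ c above, folded j_def]
  have box: "(i, j) \<in> boxes la"
    using less_nth_iff_less_conj_part[OF P i(1)] i(1) \<open>i < c\<close> gap unfolding boxes_def by simp
  have "?l + j - conj_part la j = y" using \<open>i < c\<close> gap by (simp add: j_def)
  then have "hook la i j = x - y" using hook_add_gap_eq_beta_num[OF P box] i(2) by simp
  with box show ?thesis by blast
qed

definition sub_closed :: "nat \<Rightarrow> nat set \<Rightarrow> bool" where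
  "sub_closed t B \<longleftrightarrow> (\<forall>x\<in>B. t \<le> x \<longrightarrow> x - t \<in> B)"

lemma sub_closed_multiple:
  assumes "sub_closed t B" "x \<in> B" "k * t \<le> x"
  shows "x - k * t \<in> B"
  using assms(3)
proof (induction k)
  case (Suc k)
  then have "x - k * t \<in> B" "t \<le> x - k * t" by simp_all
  then have "x - k * t - t \<in> B" using assms(1) unfolding sub_closed_def by blast
  then show ?case by (simp add: diff_diff_add add.commute)
qed (use assms(2) in simp)

lemma no_hook_dvd_iff_sub_closed:
  assumes P: "is_partition la" and "0 < t"
  shows "(\<forall>(i, j)\<in>boxes la. \<not> t dvd hook la i j) \<longleftrightarrow> sub_closed t (beta la)"
proof
  assume no_dvd: "\<forall>(i, j)\<in>boxes la. \<not> t dvd hook la i j"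
  show "sub_closed t (beta la)" unfolding sub_closed_def
  proof (intro ballI impI)
    fix x assume x: "x \<in> beta la" "t \<le> x"
    show "x - t \<in> beta la"
    proof (rule ccontr)
      assume "x - t \<notin> beta la"
      then obtain i j where "(i, j) \<in> boxes la" "hook la i j = t"
        using hook_of_beta_gap[OF P x(1), of "x - t"] x(2) \<open>0 < t\<close> by auto
      then show False using no_dvd by fastforce
    qed
  qed
next
  assume closed: "sub_closed t (beta la)"
  show "\<forall>(i, j)\<in>boxes la. \<not> t dvd hook la i j"
  proof (clarify)
    fix i j assume box: "(i, j) \<in> boxes la" and "t dvd hook la i j"
    then obtain k where k: "hook la i j = k * t" by (metis dvd_def mult.commute)
    have "beta_num la i \<in> beta la" using box unfolding boxes_def beta_def by auto
    then have "beta_num la i - k * t \<in> beta la"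
      using sub_closed_multiple[OF closed] hook_add_gap_eq_beta_num[OF P box] k by simp
    moreover have "beta_num la i - k * t = length la + j - conj_part la j"
      using hook_add_gap_eq_beta_num[OF P box] k by linarith
    ultimately show False using gap_notin_beta[OF P, of j] by simp
  qed
qed

definition core_set :: "nat \<Rightarrow> nat set \<Rightarrow> bool" where
  "core_set s B \<longleftrightarrow> finite B \<and> 0 \<notin> B \<and> sub_closed s B \<and> sub_closed (s + 1) B \<and> sub_closed (s + 2) B"

lemma is_core3_iff_core_set_beta:
  assumes "0 < s"
  shows "is_core3 s la \<longleftrightarrow> is_partition la \<and> core_set s (beta la)"
proof (cases "is_partition la")
  case True
  then show ?thesis
    using no_hook_dvd_iff_sub_closed[OF True, of s] no_hook_dvd_iff_sub_closed[OF True, of "s + 1"]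
      no_hook_dvd_iff_sub_closed[OF True, of "s + 2"] assms finite_beta zero_notin_beta[OF True]
    unfolding is_core3_def core_set_def by fast
qed (simp add: is_core3_def)

lemma beta_inj:
  assumes P: "is_partition la" and Q: "is_partition mu" and eq: "beta la = beta mu"
  shows "la = mu"
proof -
  define bs where "bs la = rev (map (beta_num la) [0..<length la])" for la
  have sorted: "sorted_wrt (<) (bs la)" if "is_partition la" for la
  proof -
    have "sorted_wrt (>) (map (beta_num la) [0..<length la])"
      using beta_num_strict_antimono[OF that] unfolding sorted_wrt_iff_nth_less by auto
    then show ?thesis unfolding bs_def sorted_wrt_rev .
  qed
  have set_bs: "set (bs la) = beta la" for la unfolding bs_def beta_def by auto
  have "bs la = bs mu" using strict_sorted_equal[OF sorted[OF P] sorted[OF Q]] set_bs eq by simp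
  then have map_eq: "map (beta_num la) [0..<length la] = map (beta_num mu) [0..<length mu]"
    unfolding bs_def by simp
  then have len: "length la = length mu" by (metis length_map length_upt minus_nat.diff_0)
  have "la ! i = mu ! i" if "i < length la" for i
  proof -
    have "beta_num la i = beta_num mu i"
      using arg_cong[where f = "\<lambda>xs. xs ! i", OF map_eq] that len by simp
    then show ?thesis unfolding beta_num_def len by simp
  qed
  then show ?thesis using len by (intro nth_equalityI)
qed

lemma strict_antimono_nth_gap:
  "sorted_wrt (>) xs \<Longrightarrow> i \<le> k \<Longrightarrow> k < length xs \<Longrightarrow> xs ! k + (k - i) \<le> xs ! (i :: nat)"
proof (induction k)
  case (Suc k)
  show ?case
  proof (cases "i = Suc k")
    case False
    then have "xs ! k + (k - i) \<le> xs ! i" using Suc by simp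
    moreover have "xs ! Suc k < xs ! k" using sorted_wrt_nth_less[OF Suc.prems(1), of k "Suc k"] Suc.prems by simp
    ultimately show ?thesis using False Suc.prems by simp
  qed simp
qed simp

lemma beta_surj:
  assumes "finite B" "0 \<notin> B"
  obtains la where "is_partition la" "beta la = B"
proof -
  define xs where "xs = rev (sorted_list_of_set B)"
  define l where "l = length xs"
  have sorted: "sorted_wrt (>) xs" unfolding xs_def sorted_wrt_rev by simp
  have set_xs: "set xs = B" unfolding xs_def using assms(1) by simp
  have large: "1 + (l - 1 - i) \<le> xs ! i" if "i < l" for i
  proof -
    have "xs ! (l - 1) \<in> B" using that set_xs unfolding l_def by (metis diff_less nth_mem zero_less_one gr_implies_not0 neq0_conv)
    then have "1 \<le> xs ! (l - 1)" using assms(2) by (cases "xs ! (l - 1)") auto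
    moreover have "xs ! (l - 1) + (l - 1 - i) \<le> xs ! i"
      using strict_antimono_nth_gap[OF sorted, of i "l - 1"] that unfolding l_def by simp
    ultimately show ?thesis by linarith
  qed
  define la where "la = map (\<lambda>i. xs ! i - (l - 1 - i)) [0..<l]"
  have la_nth: "la ! i = xs ! i - (l - 1 - i)" "length la = l" if "i < l" for i
    using that unfolding la_def by simp_all
  have "is_partition la" unfolding is_partition_def sorted_wrt_iff_nth_less
  proof (intro conjI allI impI ballI)
    fix i j assume "i < j" "j < length la"
    then show "la ! j \<le> la ! i"
      using strict_antimono_nth_gap[OF sorted, of i j] large[of j] la_nth unfolding la_def l_def by auto
  next
    fix x assume "x \<in> set la"
    then obtain i where "i < l" "x = la ! i" unfolding la_def by (auto simp: in_set_conv_nth)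
    then show "0 < x" using large[of i] la_nth[of i] by linarith
  qed
  moreover have "beta la = B"
  proof -
    have "beta_num la i = xs ! i" if "i < l" for i
      using that large[OF that] la_nth unfolding beta_num_def la_def by simp
    then have "beta la = (!) xs ` {..<l}" unfolding beta_def la_def by auto
    then show ?thesis unfolding l_def set_xs[symmetric] by (auto simp: in_set_conv_nth)
  qed
  ultimately show ?thesis using that by blast
qed

lemma bij_betw_beta_core_set:
  assumes "0 < s"
  shows "bij_betw beta {la. is_core3 s la} {B. core_set s B}"
proof (rule bij_betwI')
  show "beta la = beta mu \<longleftrightarrow> la = mu" if "la \<in> {la. is_core3 s la}" "mu \<in> {la. is_core3 s la}" for la mu
    using that beta_inj is_core3_iff_core_set_beta[OF assms] by auto
  show "beta la \<in> {B. core_set s B}" if "la \<in> {la. is_core3 s la}" for la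
    using that is_core3_iff_core_set_beta[OF assms] by auto
  show "\<exists>la\<in>{la. is_core3 s la}. B = beta la" if "B \<in> {B. core_set s B}" for B
  proof -
    have "finite B" "0 \<notin> B" using that unfolding core_set_def by auto
    then obtain la where "is_partition la" "beta la = B" by (rule beta_surj)
    then show ?thesis using that is_core3_iff_core_set_beta[OF assms] by auto
  qed
qed

definition double_size_beta :: "nat set \<Rightarrow> int" where
  "double_size_beta B = 2 * int (\<Sum>B) - int (card B) * (int (card B) - 1)"

lemma double_psize_eq:
  assumes P: "is_partition la"
  shows "2 * int (psize la) = double_size_beta (beta la)"
proof -
  let ?l = "length la"
  have "\<Sum>(beta la) = (\<Sum>i<?l. beta_num la i)"
    unfolding beta_def by (rule sum.reindex_cong[OF inj_on_beta_num[OF P] refl]) simp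
  also have "\<dots> = (\<Sum>i<?l. la ! i) + (\<Sum>i<?l. ?l - 1 - i)"
    unfolding beta_num_def by (rule sum.distrib)
  also have "(\<Sum>i<?l. ?l - 1 - i) = (\<Sum>i<?l. i)"
    using sum.nat_diff_reindex[of id ?l] by simp
  also have "(\<Sum>i<?l. la ! i) = psize la"
    by (simp add: psize_def sum_list_sum_nth atLeast0LessThan)
  finally have "int (\<Sum>(beta la)) = int (psize la) + (\<Sum>i<?l. int i)" by simp
  moreover have "2 * (\<Sum>i<n. int i) = int n * (int n - 1)" for n
    by (induction n) (simp_all add: algebra_simps)
  ultimately show ?thesis unfolding double_size_beta_def card_beta[OF P] by simp
qed

section \<open>Core sets as admissible sets of cells\<close>

text \<open>Cell (q, p) stands for q(s+2) + p = qs + (2q + p). Subtracting s + 2, s + 1 and s from the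
  value of (q + 1, p) gives the values of (q, p), (q, p + 1) and (q, p + 2), whence the closure
  condition of admissibility.\<close>

definition cell_value :: "nat \<Rightarrow> nat \<times> nat \<Rightarrow> nat" where
  "cell_value s c = fst c * (s + 2) + snd c"

definition admissible :: "nat \<Rightarrow> (nat \<times> nat) set \<Rightarrow> bool" where
  "admissible m D \<longleftrightarrow> (\<forall>q p. (q, p) \<in> D \<longrightarrow> 1 \<le> p \<and> p + 2 * q < m)
     \<and> (\<forall>q p. (Suc q, p) \<in> D \<longrightarrow> (q, p) \<in> D \<and> (q, Suc p) \<in> D \<and> (q, Suc (Suc p)) \<in> D)"

lemma admissible_bounds: "admissible m D \<Longrightarrow> (q, p) \<in> D \<Longrightarrow> 1 \<le> p \<and> p + 2 * q < m"
  unfolding admissible_def by blast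

lemma admissible_below:
  "admissible m D \<Longrightarrow> (Suc q, p) \<in> D \<Longrightarrow> (q, p) \<in> D \<and> (q, Suc p) \<in> D \<and> (q, Suc (Suc p)) \<in> D"
  unfolding admissible_def by blast

lemma admissible_descent:
  assumes "admissible m D" "(q, p) \<in> D" "k \<le> 2 * q"
  shows "(0, p + k) \<in> D"
  using assms(2,3)
proof (induction q arbitrary: p k)
  case (Suc q)
  note below = admissible_below[OF assms(1) Suc.prems(1)]
  have "k \<le> 2 * q \<or> k = 2 * q + 1 \<or> k = 2 * q + 2" using Suc.prems(2) by presburger
  then consider "k \<le> 2 * q" | "k = 2 * q + 1" | "k = 2 * q + 2" by blast
  then show ?case
  proof cases
    case 1
    then show ?thesis using Suc.IH below by blast
  next
    case 2
    then show ?thesis using Suc.IH[of "Suc p" "2 * q"] below by simp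
  next
    case 3
    then show ?thesis using Suc.IH[of "Suc (Suc p)" "2 * q"] below by simp
  qed
qed simp

lemma admissible_first_row: "admissible m D \<Longrightarrow> (q, p) \<in> D \<Longrightarrow> (0, p) \<in> D"
  using admissible_descent[of m D q p 0] by simp

lemma cell_value_div: "snd c < s + 2 \<Longrightarrow> cell_value s c div (s + 2) = fst c"
  unfolding cell_value_def by (metis Nat.add_0_right bot_nat_0.extremum_strict div_less div_mult_self3)

lemma cell_value_mod: "snd c < s + 2 \<Longrightarrow> cell_value s c mod (s + 2) = snd c"
  unfolding cell_value_def by (metis mod_mult_self3 mod_less)

lemma inj_on_cell_value: "inj_on (cell_value s) {c. snd c < s + 2}"
  by (rule inj_onI) (metis cell_value_div cell_value_mod mem_Collect_eq prod_eq_iff)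

lemma core_set_cell_value_image:
  assumes "admissible s D"
  shows "core_set s (cell_value s ` D)"
proof -
  have "D \<subseteq> {..<s} \<times> {..<s}"
  proof
    fix c assume "c \<in> D"
    then show "c \<in> {..<s} \<times> {..<s}"
      using admissible_bounds[OF assms, of "fst c" "snd c"] by (cases c) auto
  qed
  then have "finite D" by (rule finite_subset) simp
  moreover have "0 \<notin> cell_value s ` D"
    by (force simp: cell_value_def dest: admissible_bounds[OF assms])
  moreover have "sub_closed t (cell_value s ` D)" if t: "t \<in> {s, s + 1, s + 2}" for t
    unfolding sub_closed_def
  proof (intro ballI impI)
    fix x assume "x \<in> cell_value s ` D" "t \<le> x"
    then obtain q p where qp: "(q, p) \<in> D" "x = q * (s + 2) + p" by (auto simp: cell_value_def)
    show "x - t \<in> cell_value s ` D"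
    proof (cases q)
      case 0
      then show ?thesis using admissible_bounds[OF assms qp(1)] qp(2) t \<open>t \<le> x\<close> by auto
    next
      case (Suc q')
      have "x - (s + 2) = cell_value s (q', p)" "x - (s + 1) = cell_value s (q', Suc p)"
        "x - s = cell_value s (q', Suc (Suc p))" using qp(2) Suc by (auto simp: cell_value_def)
      then show ?thesis using admissible_below[OF assms, of q' p] qp(1) Suc t by auto
    qed
  qed
  ultimately show ?thesis unfolding core_set_def by simp
qed

lemma core_set_not_mem:
  assumes "core_set s B" "r \<le> 2 * q"
  shows "q * s + r \<notin> B"
  using assms(2)
proof (induction q arbitrary: r)
  case 0
  then show ?case using assms(1) unfolding core_set_def by simp
next
  case (Suc q)
  define t where "t = s + min r 2"
  have "t \<in> {s, s + 1, s + 2}" "t \<le> Suc q * s + r" unfolding t_def by (auto simp: min_def)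
  then have "sub_closed t B" using assms(1) unfolding core_set_def by auto
  moreover have "Suc q * s + r - t = q * s + (r - min r 2)" unfolding t_def by (auto simp: min_def)
  moreover have "r - min r 2 \<le> 2 * q" using Suc.prems by (auto simp: min_def)
  then have "q * s + (r - min r 2) \<notin> B" by (rule Suc.IH)
  ultimately show ?case using \<open>t \<le> _\<close> unfolding sub_closed_def by metis
qed

lemma core_set_mod_gt:
  assumes "core_set s B" "x \<in> B"
  shows "2 * (x div s) < x mod s"
proof (rule ccontr)
  assume "\<not> 2 * (x div s) < x mod s"
  then have "x \<notin> B" using core_set_not_mem[OF assms(1), of "x mod s" "x div s"] by simp
  then show False using assms(2) by simp
qed

lemma core_set_eq_cell_value_image:
  assumes "core_set s B" "0 < s"
  shows "admissible s {c. 1 \<le> snd c \<and> snd c + 2 * fst c < s \<and> cell_value s c \<in> B}"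
    (is "admissible s ?D")
    and "cell_value s ` {c. 1 \<le> snd c \<and> snd c + 2 * fst c < s \<and> cell_value s c \<in> B} = B"
proof -
  show "admissible s ?D" unfolding admissible_def
  proof (rule conjI; intro allI impI)
    fix q p assume "(Suc q, p) \<in> ?D"
    then have in_B: "cell_value s (Suc q, p) \<in> B" and "1 \<le> p" "p + 2 * Suc q < s" by auto
    have sub: "cell_value s (Suc q, p) - t \<in> B" if "t \<in> {s, s + 1, s + 2}" for t
      using assms(1) in_B that unfolding core_set_def sub_closed_def by (auto simp: cell_value_def)
    have "cell_value s (q, p) \<in> B" using sub[of "s + 2"] by (simp add: cell_value_def algebra_simps)
    moreover have "cell_value s (q, Suc p) \<in> B" using sub[of "s + 1"] by (simp add: cell_value_def algebra_simps)
    moreover have "cell_value s (q, Suc (Suc p)) \<in> B" using sub[of s] by (simp add: cell_value_def algebra_simps)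
    ultimately show "(q, p) \<in> ?D \<and> (q, Suc p) \<in> ?D \<and> (q, Suc (Suc p)) \<in> ?D"
      using \<open>1 \<le> p\<close> \<open>p + 2 * Suc q < s\<close> by auto
  qed auto
  show "cell_value s ` ?D = B"
  proof (intro set_eqI iffI)
    fix x assume x: "x \<in> B"
    define q p where "q = x div s" and "p = x mod s - 2 * (x div s)"
    have "2 * q < x mod s" using core_set_mod_gt[OF assms(1) x] by (simp add: q_def)
    have "cell_value s (q, p) = q * s + (2 * q + p)" by (simp add: cell_value_def algebra_simps)
    also have "2 * q + p = x mod s" using \<open>2 * q < x mod s\<close> by (simp add: p_def q_def)
    finally have "cell_value s (q, p) = x" by (simp add: q_def)
    moreover have "(q, p) \<in> ?D" using \<open>2 * q < x mod s\<close> assms(2) calculation x by (auto simp: p_def q_def)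
    ultimately show "x \<in> cell_value s ` ?D" by force
  qed auto
qed

lemma bij_betw_cell_value_image:
  assumes "0 < s"
  shows "bij_betw ((`) (cell_value s)) {D. admissible s D} {B. core_set s B}"
proof (rule bij_betwI')
  have sub: "D \<subseteq> {c. snd c < s + 2}" if "admissible s D" for D
    using admissible_bounds[OF that] by fastforce
  show "cell_value s ` D = cell_value s ` D' \<longleftrightarrow> D = D'"
    if "D \<in> {D. admissible s D}" "D' \<in> {D. admissible s D}" for D D'
    using inj_on_image_eq_iff[OF inj_on_cell_value sub sub] that by simp
  show "cell_value s ` D \<in> {B. core_set s B}" if "D \<in> {D. admissible s D}" for D
    using core_set_cell_value_image that by simp
  show "\<exists>D\<in>{D. admissible s D}. B = cell_value s ` D" if "B \<in> {B. core_set s B}" for B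
    using core_set_eq_cell_value_image[OF _ assms] that by blast
qed

section \<open>Motzkin paths\<close>

text \<open>Flat t is a level step followed by t; Arch a b is an up step, a, a down step, then b.\<close>

datatype motzkin = Stop | Flat motzkin | Arch motzkin motzkin

fun mlength :: "motzkin \<Rightarrow> nat" where
  "mlength Stop = 0"
| "mlength (Flat t) = Suc (mlength t)"
| "mlength (Arch a b) = mlength a + mlength b + 2"

definition motzkin_paths :: "nat \<Rightarrow> motzkin set" where
  "motzkin_paths n = {t. mlength t = n}"

fun cells :: "motzkin \<Rightarrow> (nat \<times> nat) set" where
  "cells Stop = {}"
| "cells (Flat t) = (\<lambda>(q, p). (q, Suc p)) ` cells t"
| "cells (Arch a b) = (\<lambda>p. (0, p)) ` {1..mlength a + 1} \<union> (\<lambda>(q, p). (Suc q, p)) ` cells a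
     \<union> (\<lambda>(q, p). (q, p + mlength a + 2)) ` cells b"

lemma mem_cells_Flat: "(q, p) \<in> cells (Flat t) \<longleftrightarrow> (\<exists>p'. p = Suc p' \<and> (q, p') \<in> cells t)"
  by force

lemma mem_cells_Arch:
  "(q, p) \<in> cells (Arch a b) \<longleftrightarrow> (q = 0 \<and> 1 \<le> p \<and> p \<le> mlength a + 1)
     \<or> (\<exists>q'. q = Suc q' \<and> (q', p) \<in> cells a) \<or> (mlength a + 2 \<le> p \<and> (q, p - (mlength a + 2)) \<in> cells b)"
proof -
  have "(q, p) \<in> (\<lambda>(q, p). (q, p + mlength a + 2)) ` cells b
    \<longleftrightarrow> mlength a + 2 \<le> p \<and> (q, p - (mlength a + 2)) \<in> cells b"
  proof
    assume "mlength a + 2 \<le> p \<and> (q, p - (mlength a + 2)) \<in> cells b"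
    then show "(q, p) \<in> (\<lambda>(q, p). (q, p + mlength a + 2)) ` cells b"
      by (intro rev_image_eqI[of "(q, p - (mlength a + 2))"]) auto
  qed auto
  then show ?thesis by force
qed

declare cells.simps(2,3) [simp del]

lemma admissible_cells: "admissible (mlength t) (cells t)"
proof (induction t)
  case Stop
  then show ?case by (simp add: admissible_def)
next
  case (Flat t)
  then show ?case unfolding admissible_def mem_cells_Flat by fastforce
next
  case (Arch a b)
  note bounds_a = admissible_bounds[OF Arch.IH(1)] and bounds_b = admissible_bounds[OF Arch.IH(2)]
  show ?case unfolding admissible_def
  proof (rule conjI; intro allI impI)
    fix q p assume "(q, p) \<in> cells (Arch a b)"
    then show "1 \<le> p \<and> p + 2 * q < mlength (Arch a b)"
      unfolding mem_cells_Arch by (auto dest: bounds_a bounds_b)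
  next
    fix q p assume "(Suc q, p) \<in> cells (Arch a b)"
    then consider "(q, p) \<in> cells a" | "mlength a + 2 \<le> p" "(Suc q, p - (mlength a + 2)) \<in> cells b"
      unfolding mem_cells_Arch by auto
    then show "(q, p) \<in> cells (Arch a b) \<and> (q, Suc p) \<in> cells (Arch a b) \<and> (q, Suc (Suc p)) \<in> cells (Arch a b)"
    proof cases
      case 1
      then show ?thesis
      proof (cases q)
        case 0
        then show ?thesis using bounds_a[OF 1] unfolding mem_cells_Arch by auto
      next
        case (Suc q')
        then show ?thesis using admissible_below[OF Arch.IH(1)] 1 unfolding mem_cells_Arch by auto
      qed
    next
      case 2
      then obtain r where r: "p = r + (mlength a + 2)" "(Suc q, r) \<in> cells b"
        by (metis le_add_diff_inverse2)
      then show ?thesis using admissible_below[OF Arch.IH(2) r(2)] unfolding mem_cells_Arch by auto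
    qed
  qed
qed

lemma cells_bounds: "(q, p) \<in> cells t \<Longrightarrow> 1 \<le> p \<and> p + 2 * q < mlength t"
  using admissible_bounds[OF admissible_cells] .

lemma finite_cells: "finite (cells t)"
proof (rule finite_subset)
  show "cells t \<subseteq> {..<mlength t} \<times> {..<mlength t}" using cells_bounds by fastforce
qed simp

lemma cells_eq_Flat_proj: "cells t = {(q, p). (q, Suc p) \<in> cells (Flat t)}"
  unfolding mem_cells_Flat by simp

lemma cells_eq_Arch_proj1: "cells a = {(q, p). (Suc q, p) \<in> cells (Arch a b) \<and> p \<le> mlength a + 1}"
  unfolding mem_cells_Arch using cells_bounds[of _ _ a] by fastforce

lemma cells_eq_Arch_proj2: "cells b = {(q, p). (q, p + mlength a + 2) \<in> cells (Arch a b)}"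
  unfolding mem_cells_Arch using cells_bounds[of _ _ a] by fastforce

lemma first_row_cells_Arch:
  "(0, p) \<in> cells (Arch a b) \<longleftrightarrow> 1 \<le> p \<and> p \<le> mlength a + 1 \<or> mlength a + 3 \<le> p \<and> (0, p - (mlength a + 2)) \<in> cells b"
  unfolding mem_cells_Arch using cells_bounds[of 0 0 b] by (auto simp: not_less_eq_eq)

lemma zero_one_notin_cells_Flat: "(0, 1) \<notin> cells (Flat t)"
  unfolding mem_cells_Flat using cells_bounds[of 0 0 t] by auto

lemma mlength_le_if_cells_Arch_eq:
  assumes "cells (Arch a b) = cells (Arch a' b')"
  shows "mlength a \<le> mlength a'"
proof (rule ccontr)
  assume "\<not> mlength a \<le> mlength a'"
  then have "(0, mlength a' + 2) \<in> cells (Arch a b)" using first_row_cells_Arch by simp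
  moreover have "(0, mlength a' + 2) \<notin> cells (Arch a' b')" using first_row_cells_Arch by simp
  ultimately show False using assms by simp
qed

lemma cells_inj: "mlength t = mlength t' \<Longrightarrow> cells t = cells t' \<Longrightarrow> t = t'"
proof (induction t arbitrary: t')
  case Stop
  then show ?case by (cases t') auto
next
  case (Flat t)
  show ?case
  proof (cases t')
    case (Flat t'')
    then show ?thesis using Flat.IH Flat.prems cells_eq_Flat_proj[of t] cells_eq_Flat_proj[of t''] by simp
  next
    case (Arch a b)
    have "(0, 1) \<in> cells (Arch a b)" by (simp add: first_row_cells_Arch)
    then show ?thesis using Flat.prems(2) zero_one_notin_cells_Flat[of t] Arch by simp
  qed (use Flat.prems in simp)
next
  case (Arch a b)
  show ?case
  proof (cases t')
    case (Flat t'')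
    have "(0, 1) \<in> cells (Arch a b)" by (simp add: first_row_cells_Arch)
    then show ?thesis using Arch.prems(2) zero_one_notin_cells_Flat[of t''] Flat by simp
  next
    case (Arch a' b')
    with Arch.prems have eq: "cells (Arch a b) = cells (Arch a' b')" "mlength (Arch a b) = mlength (Arch a' b')"
      by simp_all
    have len: "mlength a = mlength a'"
      using mlength_le_if_cells_Arch_eq[OF eq(1)] mlength_le_if_cells_Arch_eq[OF eq(1)[symmetric]] by simp
    have "a = a'"
      using Arch.IH(1) len cells_eq_Arch_proj1[of a b] cells_eq_Arch_proj1[of a' b'] eq(1) by simp
    moreover have "b = b'"
      using Arch.IH(2) len eq cells_eq_Arch_proj2[of b a] cells_eq_Arch_proj2[of b' a'] by simp
    ultimately show ?thesis using \<open>t' = _\<close> by simp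
  qed (use Arch.prems in simp)
qed

lemma admissible_Flat_split:
  assumes adm: "admissible m D" and "(0, 1) \<notin> D"
  shows "admissible (m - 1) {(q, p). (q, Suc p) \<in> D}" (is "admissible _ ?D")
    and "D = (\<lambda>(q, p). (q, Suc p)) ` {(q, p). (q, Suc p) \<in> D}"
proof -
  show "admissible (m - 1) ?D" unfolding admissible_def
  proof (rule conjI; intro allI impI)
    fix q p assume "(q, p) \<in> ?D"
    then have c: "(q, Suc p) \<in> D" by simp
    have "p \<noteq> 0" using admissible_first_row[OF adm c] \<open>(0, 1) \<notin> D\<close> by (cases p) auto
    then show "1 \<le> p \<and> p + 2 * q < m - 1" using admissible_bounds[OF adm c] by simp
  next
    fix q p assume "(Suc q, p) \<in> ?D"
    then show "(q, p) \<in> ?D \<and> (q, Suc p) \<in> ?D \<and> (q, Suc (Suc p)) \<in> ?D"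
      using admissible_below[OF adm, of q "Suc p"] by simp
  qed
  show "D = (\<lambda>(q, p). (q, Suc p)) ` ?D"
  proof (intro set_eqI iffI)
    fix c assume "c \<in> D"
    then obtain q p where c: "c = (q, p)" "(q, p) \<in> D" by (cases c) auto
    have "p \<noteq> 0" "p \<noteq> 1"
      using admissible_bounds[OF adm c(2)] admissible_first_row[OF adm c(2)] \<open>(0, 1) \<notin> D\<close> by auto
    then obtain p' where "p = Suc (Suc p')" by (metis One_nat_def not0_implies_Suc)
    then show "c \<in> (\<lambda>(q, p). (q, Suc p)) ` ?D" using c by (intro rev_image_eqI[of "(q, Suc p')"]) auto
  qed auto
qed

lemma admissible_first_row_gap:
  assumes "admissible m D" "(0, 1) \<in> D"
  obtains l where "(0, l + 2) \<notin> D" "\<And>p. 1 \<le> p \<Longrightarrow> p \<le> l + 1 \<Longrightarrow> (0, p) \<in> D"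
proof -
  have "\<exists>k. (0, k + 2) \<notin> D" using admissible_bounds[OF assms(1), of 0 "m + 2"] by auto
  define l where "l = (LEAST k. (0, k + 2) \<notin> D)"
  have "(0, l + 2) \<notin> D" unfolding l_def by (rule LeastI_ex) fact
  moreover have "(0, p) \<in> D" if "1 \<le> p" "p \<le> l + 1" for p
  proof (cases "p = 1")
    case False
    then have "p - 2 < l" "p - 2 + 2 = p" using that by auto
    then show ?thesis using not_less_Least[of "p - 2" "\<lambda>k. (0, k + 2) \<notin> D"] unfolding l_def[symmetric] by simp
  qed (use assms(2) in simp)
  ultimately show thesis using that by blast
qed

lemma admissible_below_gap:
  assumes "admissible m D" "(0, g) \<notin> D" "(q, p) \<in> D" "p < g"
  shows "p + 2 * q < g"
proof (rule ccontr)
  assume "\<not> p + 2 * q < g"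
  then have "(0, p + (g - p)) \<in> D" using admissible_descent[OF assms(1,3), of "g - p"] by simp
  then show False using assms(2,4) by simp
qed

lemma admissible_Arch_parts:
  assumes adm: "admissible m D" and gap: "(0, l + 2) \<notin> D"
    and row: "\<And>p. 1 \<le> p \<Longrightarrow> p \<le> l + 1 \<Longrightarrow> (0, p) \<in> D"
  shows "l + 2 \<le> m"
    and "admissible l {(q, p). (Suc q, p) \<in> D \<and> p \<le> l + 1}" (is "admissible _ ?A")
    and "admissible (m - l - 2) {(q, p). (q, p + l + 2) \<in> D}" (is "admissible _ ?B")
proof -
  note bounds = admissible_bounds[OF adm]
  have left: "p + 2 * q < l + 2" if "(q, p) \<in> D" "p \<le> l + 1" for q p
    using admissible_below_gap[OF adm gap that(1)] that(2) by simp
  have "(0, l + 1) \<in> D" by (rule row) simp_all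
  then show "l + 2 \<le> m" using bounds by fastforce
  show "admissible l ?A" unfolding admissible_def
  proof (rule conjI; intro allI impI)
    fix q p assume "(q, p) \<in> ?A"
    then have "(Suc q, p) \<in> D" "p \<le> l + 1" by simp_all
    then show "1 \<le> p \<and> p + 2 * q < l" using bounds[of "Suc q" p] left[of "Suc q" p] by simp
  next
    fix q p assume "(Suc q, p) \<in> ?A"
    then have "(Suc (Suc q), p) \<in> D" "p \<le> l + 1" by simp_all
    then have "p + 2 * Suc (Suc q) < l + 2" by (rule left)
    then show "(q, p) \<in> ?A \<and> (q, Suc p) \<in> ?A \<and> (q, Suc (Suc p)) \<in> ?A"
      using admissible_below[OF adm \<open>(Suc (Suc q), p) \<in> D\<close>] by simp
  qed
  show "admissible (m - l - 2) ?B" unfolding admissible_def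
  proof (rule conjI; intro allI impI)
    fix q p assume "(q, p) \<in> ?B"
    then have "(q, p + l + 2) \<in> D" by simp
    moreover from this have "p \<noteq> 0" using admissible_first_row[OF adm] gap by (cases p) auto
    ultimately show "1 \<le> p \<and> p + 2 * q < m - l - 2" using bounds[of q "p + l + 2"] by simp
  next
    fix q p assume "(Suc q, p) \<in> ?B"
    then show "(q, p) \<in> ?B \<and> (q, Suc p) \<in> ?B \<and> (q, Suc (Suc p)) \<in> ?B"
      using admissible_below[OF adm, of q "p + l + 2"] by simp
  qed
qed

lemma admissible_Arch_decomp:
  assumes adm: "admissible m D" and gap: "(0, l + 2) \<notin> D"
    and row: "\<And>p. 1 \<le> p \<Longrightarrow> p \<le> l + 1 \<Longrightarrow> (0, p) \<in> D"
  shows "D = (\<lambda>p. (0, p)) ` {1..l + 1} \<union> (\<lambda>(q, p). (Suc q, p)) ` {(q, p). (Suc q, p) \<in> D \<and> p \<le> l + 1}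
           \<union> (\<lambda>(q, p). (q, p + l + 2)) ` {(q, p). (q, p + l + 2) \<in> D}"
    (is "D = ?R \<union> ?U \<union> ?S")
proof (intro equalityI subsetI)
  fix c assume "c \<in> D"
  then obtain q p where c: "c = (q, p)" "(q, p) \<in> D" by (cases c) auto
  have "p \<noteq> l + 2" using admissible_first_row[OF adm c(2)] gap by auto
  then have "p \<le> l + 1 \<or> l + 2 < p" by linarith
  then consider "q = 0" "p \<le> l + 1" | q' where "q = Suc q'" "p \<le> l + 1" | "l + 2 < p"
    by (cases q) auto
  then show "c \<in> ?R \<union> ?U \<union> ?S"
  proof cases
    case 1
    then have "c \<in> ?R" using c admissible_bounds[OF adm c(2)] by auto
    then show ?thesis by blast
  next
    case (2 q')
    then have "c \<in> ?U" using c by (intro rev_image_eqI[of "(q', p)"]) auto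
    then show ?thesis by blast
  next
    case 3
    define r where "r = p - (l + 2)"
    have "p = r + l + 2" using 3 unfolding r_def by simp
    then have "c \<in> ?S" using c by (intro rev_image_eqI[of "(q, r)"]) auto
    then show ?thesis by blast
  qed
next
  fix c assume "c \<in> ?R \<union> ?U \<union> ?S"
  then show "c \<in> D" using row by auto
qed

lemma cells_surj: "admissible m D \<Longrightarrow> \<exists>t. mlength t = m \<and> cells t = D"
proof (induction m arbitrary: D rule: less_induct)
  case (less m)
  show ?case
  proof (cases "(0, 1) \<in> D")
    case False
    show ?thesis
    proof (cases m)
      case 0
      then have "D = {}" using admissible_bounds[OF less.prems] by fastforce
      then show ?thesis using 0 by (intro exI[of _ Stop]) simp
    next
      case (Suc m')
      note split = admissible_Flat_split[OF less.prems False]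
      obtain t where "mlength t = m'" "cells t = {(q, p). (q, Suc p) \<in> D}"
        using less.IH[OF _ split(1)] Suc by auto
      then show ?thesis using split(2) Suc by (intro exI[of _ "Flat t"]) (simp add: cells.simps)
    qed
  next
    case True
    then obtain l where gap: "(0, l + 2) \<notin> D" and row: "\<And>p. 1 \<le> p \<Longrightarrow> p \<le> l + 1 \<Longrightarrow> (0, p) \<in> D"
      using admissible_first_row_gap[OF less.prems] by blast
    note parts = admissible_Arch_parts[OF less.prems gap row]
    obtain a where a: "mlength a = l" "cells a = {(q, p). (Suc q, p) \<in> D \<and> p \<le> l + 1}"
      using less.IH[OF _ parts(2)] parts(1) by auto
    obtain b where b: "mlength b = m - l - 2" "cells b = {(q, p). (q, p + l + 2) \<in> D}"
      using less.IH[OF _ parts(3)] parts(1) by auto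
    show ?thesis
      using a b parts(1) admissible_Arch_decomp[OF less.prems gap row]
      by (intro exI[of _ "Arch a b"]) (simp add: cells.simps)
  qed
qed

lemma bij_betw_cells: "bij_betw cells (motzkin_paths m) {D. admissible m D}"
proof (rule bij_betwI')
  show "cells t = cells t' \<longleftrightarrow> t = t'" if "t \<in> motzkin_paths m" "t' \<in> motzkin_paths m" for t t'
    using that cells_inj unfolding motzkin_paths_def by auto
  show "cells t \<in> {D. admissible m D}" if "t \<in> motzkin_paths m" for t
    using that admissible_cells unfolding motzkin_paths_def by auto
  show "\<exists>t\<in>motzkin_paths m. D = cells t" if "D \<in> {D. admissible m D}" for D
    using that cells_surj unfolding motzkin_paths_def by fastforce
qed

section \<open>The size of a core as a path statistic\<close>

lemma sum_cells_Flat: "(\<Sum>c\<in>cells (Flat t). f c) = (\<Sum>(q, p)\<in>cells t. f (q, Suc p))"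
  unfolding cells.simps by (subst sum.reindex) (auto simp: inj_on_def case_prod_unfold)

lemma sum_cells_Arch:
  "(\<Sum>c\<in>cells (Arch a b). f c) = (\<Sum>p = 1..mlength a + 1. f (0, p))
     + (\<Sum>(q, p)\<in>cells a. f (Suc q, p)) + (\<Sum>(q, p)\<in>cells b. f (q, p + mlength a + 2))"
proof -
  define R where "R = (\<lambda>p. (0::nat, p)) ` {1..mlength a + 1}"
  define U where "U = (\<lambda>(q, p). (Suc q, p)) ` cells a"
  define S where "S = (\<lambda>(q, p). (q, p + mlength a + 2)) ` cells b"
  have "R \<inter> U = {}" unfolding R_def U_def by auto
  moreover have "(R \<union> U) \<inter> S = {}"
    unfolding R_def U_def S_def using cells_bounds[of _ _ a] by fastforce
  moreover have "finite R" "finite U" "finite S" unfolding R_def U_def S_def by (simp_all add: finite_cells)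
  ultimately have "(\<Sum>c\<in>cells (Arch a b). f c) = sum f R + sum f U + sum f S"
    unfolding cells.simps R_def[symmetric] U_def[symmetric] S_def[symmetric]
    by (simp add: sum.union_disjoint)
  moreover have "sum f R = (\<Sum>p = 1..mlength a + 1. f (0, p))"
    unfolding R_def by (subst sum.reindex) (auto simp: inj_on_def)
  moreover have "sum f U = (\<Sum>(q, p)\<in>cells a. f (Suc q, p))"
    unfolding U_def by (subst sum.reindex) (auto simp: inj_on_def case_prod_unfold)
  moreover have "sum f S = (\<Sum>(q, p)\<in>cells b. f (q, p + mlength a + 2))"
    unfolding S_def by (subst sum.reindex) (auto simp: inj_on_def case_prod_unfold)
  ultimately show ?thesis by simp
qed

definition ncells :: "motzkin \<Rightarrow> nat" where
  "ncells t = card (cells t)"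

definition row_sum :: "motzkin \<Rightarrow> nat" where
  "row_sum t = (\<Sum>(q, p)\<in>cells t. q)"

definition col_sum :: "motzkin \<Rightarrow> nat" where
  "col_sum t = (\<Sum>(q, p)\<in>cells t. p)"

lemma ncells_eq_sum: "ncells t = (\<Sum>c\<in>cells t. 1)"
  unfolding ncells_def by simp

lemma ncells_simps [simp]:
  "ncells Stop = 0"
  "ncells (Flat t) = ncells t"
  "ncells (Arch a b) = mlength a + 1 + ncells a + ncells b"
  unfolding ncells_eq_sum sum_cells_Flat sum_cells_Arch by (simp_all add: split_def)

lemma row_sum_simps [simp]:
  "row_sum Stop = 0"
  "row_sum (Flat t) = row_sum t"
  "row_sum (Arch a b) = row_sum a + ncells a + row_sum b"
  unfolding row_sum_def ncells_def sum_cells_Flat sum_cells_Arch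
  by (simp_all add: split_def sum_Suc)

lemma col_sum_simps [simp]:
  "col_sum Stop = 0"
  "col_sum (Flat t) = col_sum t + ncells t"
  "col_sum (Arch a b) = (\<Sum>p = 1..mlength a + 1. p) + col_sum a + col_sum b + (mlength a + 2) * ncells b"
  unfolding col_sum_def ncells_def sum_cells_Flat sum_cells_Arch
  by (simp_all add: split_def sum_Suc sum.distrib algebra_simps)

definition double_size :: "motzkin \<Rightarrow> int" where
  "double_size t = 2 * int ((mlength t + 2) * row_sum t + col_sum t) - int (ncells t) * (int (ncells t) - 1)"

lemma double_size_Flat: "double_size (Flat t) = double_size t + 2 * int (row_sum t) + 2 * int (ncells t)"
  unfolding double_size_def by (simp add: algebra_simps)

lemma double_size_Arch:
  "double_size (Arch a b) = double_size a + double_size b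
     + 2 * (int (mlength b) + 2) * int (row_sum a) + 2 * (int (mlength a) + 2) * int (row_sum b)
     + 2 * (int (mlength b) + 3) * int (ncells a) + 2 * (int (mlength a) + 1) + 2 * int (ncells b)
     - 2 * int (ncells a) * int (ncells b)"
proof -
  define S where "S = int (\<Sum>p = 1..mlength a + 1. p)"
  have gauss: "2 * S = (int (mlength a) + 1) * (int (mlength a) + 2)"
    using double_gauss_sum_from_Suc_0[of "mlength a + 1", where 'a = int]
    unfolding S_def of_nat_sum by (simp add: algebra_simps)
  show ?thesis
    using gauss unfolding double_size_def ncells_simps row_sum_simps col_sum_simps mlength.simps
      of_nat_add of_nat_mult of_nat_numeral of_nat_1 S_def[symmetric]
    by algebra
qed

lemma double_size_beta_cells: "double_size_beta (cell_value (mlength t) ` cells t) = double_size t"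
proof -
  let ?s = "mlength t"
  have "cells t \<subseteq> {c. snd c < ?s + 2}"
  proof
    fix c assume "c \<in> cells t"
    then show "c \<in> {c. snd c < ?s + 2}" using cells_bounds[of "fst c" "snd c" t] by simp
  qed
  then have inj: "inj_on (cell_value ?s) (cells t)" by (rule inj_on_subset[OF inj_on_cell_value])
  have "\<Sum>(cell_value ?s ` cells t) = (\<Sum>(q, p)\<in>cells t. q * (?s + 2) + p)"
    unfolding sum.reindex[OF inj] by (simp add: cell_value_def case_prod_unfold)
  also have "\<dots> = (\<Sum>(q, p)\<in>cells t. q) * (?s + 2) + (\<Sum>(q, p)\<in>cells t. p)"
    by (simp only: split_def sum.distrib sum_distrib_right)
  also have "\<dots> = (?s + 2) * row_sum t + col_sum t"
    unfolding row_sum_def col_sum_def by simp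
  finally show ?thesis
    unfolding double_size_beta_def double_size_def card_image[OF inj] ncells_def by simp
qed

theorem double_h_eq_sum_double_size:
  assumes "0 < s"
  shows "2 * int (h s) = (\<Sum>t\<in>motzkin_paths s. double_size t)"
proof -
  have "2 * int (h s) = (\<Sum>la\<in>{la. is_core3 s la}. double_size_beta (beta la))"
    unfolding h_def of_nat_sum sum_distrib_left
    by (intro sum.cong) (auto simp: double_psize_eq is_core3_def)
  also have "\<dots> = (\<Sum>B\<in>{B. core_set s B}. double_size_beta B)"
    by (rule sum.reindex_bij_betw[OF bij_betw_beta_core_set[OF assms]])
  also have "\<dots> = (\<Sum>D\<in>{D. admissible s D}. double_size_beta (cell_value s ` D))"
    by (rule sum.reindex_bij_betw[OF bij_betw_cell_value_image[OF assms], symmetric])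
  also have "\<dots> = (\<Sum>t\<in>motzkin_paths s. double_size_beta (cell_value s ` cells t))"
    by (rule sum.reindex_bij_betw[OF bij_betw_cells, symmetric])
  also have "\<dots> = (\<Sum>t\<in>motzkin_paths s. double_size t)"
    by (intro sum.cong) (auto simp: motzkin_paths_def double_size_beta_cells[symmetric])
  finally show ?thesis .
qed

section \<open>Generating functions\<close>

lemma motzkin_paths_0: "motzkin_paths 0 = {Stop}"
  unfolding motzkin_paths_def by (auto elim: mlength.elims)

lemma motzkin_paths_Suc:
  "motzkin_paths (Suc n) = Flat ` motzkin_paths n
     \<union> (\<Union>i<n. (\<lambda>(a, b). Arch a b) ` (motzkin_paths i \<times> motzkin_paths (n - 1 - i)))"
proof (rule set_eqI)
  fix t
  show "t \<in> motzkin_paths (Suc n) \<longleftrightarrow>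
    t \<in> Flat ` motzkin_paths n \<union> (\<Union>i<n. (\<lambda>(a, b). Arch a b) ` (motzkin_paths i \<times> motzkin_paths (n - 1 - i)))"
    by (cases t) (auto simp: motzkin_paths_def image_iff)
qed

lemma finite_motzkin_paths: "finite (motzkin_paths n)"
proof (induction n rule: less_induct)
  case (less n)
  then show ?case by (cases n) (simp_all add: motzkin_paths_0 motzkin_paths_Suc)
qed

lemma sum_motzkin_paths_Suc:
  "(\<Sum>t\<in>motzkin_paths (Suc n). f t) = (\<Sum>t\<in>motzkin_paths n. f (Flat t))
     + (\<Sum>i<n. \<Sum>a\<in>motzkin_paths i. \<Sum>b\<in>motzkin_paths (n - 1 - i). f (Arch a b))"
proof -
  let ?U = "\<Union>i<n. (\<lambda>(a, b). Arch a b) ` (motzkin_paths i \<times> motzkin_paths (n - 1 - i))"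
  have "(\<Sum>t\<in>motzkin_paths (Suc n). f t) = sum f (Flat ` motzkin_paths n) + sum f ?U"
    unfolding motzkin_paths_Suc by (rule sum.union_disjoint) (auto simp: finite_motzkin_paths)
  moreover have "sum f (Flat ` motzkin_paths n) = (\<Sum>t\<in>motzkin_paths n. f (Flat t))"
    by (simp add: sum.reindex inj_on_def)
  moreover have "sum f ?U = (\<Sum>i<n. sum f ((\<lambda>(a, b). Arch a b) ` (motzkin_paths i \<times> motzkin_paths (n - 1 - i))))"
    by (rule sum.UNION_disjoint) (auto simp: motzkin_paths_def finite_motzkin_paths[unfolded motzkin_paths_def])
  moreover have "sum f ((\<lambda>(a, b). Arch a b) ` (motzkin_paths i \<times> motzkin_paths j))
      = (\<Sum>a\<in>motzkin_paths i. \<Sum>b\<in>motzkin_paths j. f (Arch a b))" for i j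
    by (subst sum.reindex) (auto simp: inj_on_def sum.cartesian_product intro!: sum.cong)
  ultimately show ?thesis by simp
qed

definition path_gf :: "(motzkin \<Rightarrow> int) \<Rightarrow> int fps" where
  "path_gf f = Abs_fps (\<lambda>n. \<Sum>t\<in>motzkin_paths n. f t)"

definition pair_gf :: "(motzkin \<Rightarrow> motzkin \<Rightarrow> int) \<Rightarrow> int fps" where
  "pair_gf g = Abs_fps (\<lambda>n. \<Sum>i\<le>n. \<Sum>a\<in>motzkin_paths i. \<Sum>b\<in>motzkin_paths (n - i). g a b)"

lemma path_gf_decomp:
  "path_gf f = fps_const (f Stop) + fps_X * path_gf (\<lambda>t. f (Flat t)) + fps_X^2 * pair_gf (\<lambda>a b. f (Arch a b))"
proof (rule fps_ext)
  fix n
  show "fps_nth (path_gf f) n = fps_nth (fps_const (f Stop) + fps_X * path_gf (\<lambda>t. f (Flat t))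
    + fps_X^2 * pair_gf (\<lambda>a b. f (Arch a b))) n"
  proof (cases n)
    case 0
    then show ?thesis by (simp add: path_gf_def motzkin_paths_0 fps_X_power_mult_nth)
  next
    case (Suc m)
    then show ?thesis
    proof (cases m)
      case (Suc k)
      then have "{..<m} = {..k}" by auto
      then show ?thesis using \<open>n = Suc m\<close> Suc
        by (simp add: path_gf_def pair_gf_def sum_motzkin_paths_Suc fps_X_power_mult_nth)
    qed (simp add: path_gf_def sum_motzkin_paths_Suc fps_X_power_mult_nth)
  qed
qed

lemma pair_gf_mult: "pair_gf (\<lambda>a b. f a * g b) = path_gf f * path_gf g"
  by (rule fps_ext) (simp add: pair_gf_def path_gf_def fps_mult_nth atLeast0AtMost sum_product)

lemma pair_gf_add: "pair_gf (\<lambda>a b. f a b + g a b) = pair_gf f + pair_gf g"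
  by (rule fps_ext) (simp add: pair_gf_def sum.distrib)

lemma pair_gf_diff: "pair_gf (\<lambda>a b. f a b - g a b) = pair_gf f - pair_gf g"
  by (rule fps_ext) (simp add: pair_gf_def sum_subtractf)

lemma path_gf_add: "path_gf (\<lambda>t. f t + g t) = path_gf f + path_gf g"
  by (rule fps_ext) (simp add: path_gf_def sum.distrib)

lemma path_gf_cmult: "path_gf (\<lambda>t. c * f t) = fps_const c * path_gf f"
  by (rule fps_ext) (simp add: path_gf_def sum_distrib_left)

lemma path_gf_mlength_mult: "path_gf (\<lambda>t. int (mlength t) * f t) = fps_X * fps_deriv (path_gf f)"
proof (rule fps_ext)
  fix n
  have "(\<Sum>t\<in>motzkin_paths n. int (mlength t) * f t) = (\<Sum>t\<in>motzkin_paths n. int n * f t)"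
    by (rule sum.cong) (auto simp: motzkin_paths_def)
  then show "fps_nth (path_gf (\<lambda>t. int (mlength t) * f t)) n = fps_nth (fps_X * fps_deriv (path_gf f)) n"
    by (cases n) (simp_all add: path_gf_def sum_distrib_left motzkin_paths_0)
qed

definition count_gf :: "int fps" where "count_gf = path_gf (\<lambda>_. 1)"
definition ncells_gf :: "int fps" where "ncells_gf = path_gf (\<lambda>t. int (ncells t))"
definition row_sum_gf :: "int fps" where "row_sum_gf = path_gf (\<lambda>t. int (row_sum t))"
definition double_size_gf :: "int fps" where "double_size_gf = path_gf double_size"

lemma path_gf_mlength_add:
  "path_gf (\<lambda>t. int (mlength t) + c) = fps_X * fps_deriv count_gf + fps_const c * count_gf"
  using path_gf_add[of "\<lambda>t. int (mlength t) * 1" "\<lambda>t. c * 1"]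
  unfolding path_gf_mlength_mult path_gf_cmult count_gf_def by simp

lemma count_gf_eq: "count_gf = 1 + fps_X * count_gf + fps_X^2 * count_gf^2"
  using path_gf_decomp[of "\<lambda>_. 1"] pair_gf_mult[of "\<lambda>_. 1" "\<lambda>_. 1"]
  unfolding count_gf_def by (simp add: power2_eq_square)

lemma ncells_gf_eq:
  "ncells_gf = fps_X * ncells_gf
     + fps_X^2 * (count_gf * (count_gf + fps_X * fps_deriv count_gf) + 2 * count_gf * ncells_gf)"
proof -
  have decomp: "ncells_gf = fps_X * ncells_gf + fps_X^2 * pair_gf (\<lambda>a b. int (ncells (Arch a b)))"
    using path_gf_decomp[of "\<lambda>t. int (ncells t)"] by (simp add: ncells_gf_def)
  have "(\<lambda>a b. int (ncells (Arch a b))) = (\<lambda>a b. (int (mlength a) + 1) * 1 + int (ncells a) * 1 + 1 * int (ncells b))"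
    by (simp add: fun_eq_iff)
  then have "pair_gf (\<lambda>a b. int (ncells (Arch a b)))
      = (fps_X * fps_deriv count_gf + count_gf) * count_gf + ncells_gf * count_gf + count_gf * ncells_gf"
    by (simp only: pair_gf_add pair_gf_mult path_gf_mlength_add) (simp add: ncells_gf_def count_gf_def)
  with decomp show ?thesis by algebra
qed

lemma row_sum_gf_eq:
  "row_sum_gf = fps_X * row_sum_gf + fps_X^2 * (2 * count_gf * row_sum_gf + count_gf * ncells_gf)"
proof -
  have decomp: "row_sum_gf = fps_X * row_sum_gf + fps_X^2 * pair_gf (\<lambda>a b. int (row_sum (Arch a b)))"
    using path_gf_decomp[of "\<lambda>t. int (row_sum t)"] by (simp add: row_sum_gf_def)
  have "(\<lambda>a b. int (row_sum (Arch a b))) = (\<lambda>a b. int (row_sum a) * 1 + int (ncells a) * 1 + 1 * int (row_sum b))"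
    by (simp add: fun_eq_iff)
  then have "pair_gf (\<lambda>a b. int (row_sum (Arch a b)))
      = row_sum_gf * count_gf + ncells_gf * count_gf + count_gf * row_sum_gf"
    by (simp only: pair_gf_add pair_gf_mult) (simp add: ncells_gf_def count_gf_def row_sum_gf_def)
  with decomp show ?thesis by algebra
qed

lemma double_size_gf_eq:
  "double_size_gf = fps_X * (double_size_gf + 2 * row_sum_gf + 2 * ncells_gf)
     + fps_X^2 * (2 * double_size_gf * count_gf + 4 * row_sum_gf * (2 * count_gf + fps_X * fps_deriv count_gf)
       + 2 * ncells_gf * (4 * count_gf + fps_X * fps_deriv count_gf)
       + 2 * count_gf * (count_gf + fps_X * fps_deriv count_gf) - 2 * ncells_gf^2)"
proof -
  let ?L = "\<lambda>c. path_gf (\<lambda>t. int (mlength t) + c)"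
  have flat: "path_gf (\<lambda>t. double_size (Flat t)) = double_size_gf + 2 * row_sum_gf + 2 * ncells_gf"
    unfolding double_size_gf_def row_sum_gf_def ncells_gf_def double_size_Flat
    using path_gf_add path_gf_cmult by (simp add: fps_numeral_fps_const[symmetric])
  have "(\<lambda>a b. double_size (Arch a b)) = (\<lambda>a b. double_size a * 1 + 1 * double_size b
      + (2 * int (row_sum a)) * (int (mlength b) + 2) + (2 * (int (mlength a) + 2)) * int (row_sum b)
      + (2 * int (ncells a)) * (int (mlength b) + 3) + (2 * (int (mlength a) + 1)) * 1
      + 2 * 1 * int (ncells b) - (2 * int (ncells a)) * int (ncells b))"
    by (simp add: fun_eq_iff double_size_Arch algebra_simps)
  then have "pair_gf (\<lambda>a b. double_size (Arch a b)) = double_size_gf * count_gf + count_gf * double_size_gf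
      + (2 * row_sum_gf) * ?L 2 + (2 * ?L 2) * row_sum_gf + (2 * ncells_gf) * ?L 3 + (2 * ?L 1) * count_gf
      + 2 * count_gf * ncells_gf - (2 * ncells_gf) * ncells_gf"
    by (simp only: pair_gf_add pair_gf_diff pair_gf_mult path_gf_cmult)
      (simp add: double_size_gf_def count_gf_def row_sum_gf_def ncells_gf_def fps_numeral_fps_const)
  then have arch: "pair_gf (\<lambda>a b. double_size (Arch a b)) = 2 * double_size_gf * count_gf
      + 4 * row_sum_gf * (2 * count_gf + fps_X * fps_deriv count_gf)
      + 2 * ncells_gf * (4 * count_gf + fps_X * fps_deriv count_gf)
      + 2 * count_gf * (count_gf + fps_X * fps_deriv count_gf) - 2 * ncells_gf^2"
    unfolding path_gf_mlength_add fps_numeral_fps_const[symmetric] fps_const_1_eq_1 by algebra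
  show ?thesis
    using path_gf_decomp[of double_size] unfolding double_size_gf_def[symmetric] flat arch
    by (simp add: double_size_def)
qed

lemma count_gf_discriminant:
  "(1 - fps_X - 2 * fps_X^2 * count_gf)^2 = 1 - 2 * fps_X - 3 * fps_X^2"
  using count_gf_eq by algebra

lemma count_gf_deriv:
  "(1 - fps_X - 2 * fps_X^2 * count_gf) * fps_deriv count_gf = count_gf + 2 * fps_X * count_gf^2"
proof -
  have "fps_deriv count_gf = fps_deriv (1 + fps_X * count_gf + fps_X^2 * count_gf^2)"
    using arg_cong[OF count_gf_eq, of fps_deriv] .
  then have "fps_deriv count_gf = count_gf + fps_X * fps_deriv count_gf + 2 * fps_X * count_gf^2
      + 2 * fps_X^2 * count_gf * fps_deriv count_gf"
    by (simp add: fps_deriv_power algebra_simps power2_eq_square)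
  then show ?thesis by algebra
qed

lemma count_gf_discriminant_root_nonzero: "1 - fps_X - 2 * fps_X^2 * count_gf \<noteq> 0"
  by (rule fps_nonzeroI[of _ 0]) simp

lemma ncells_gf_closed_form: "(1 - 2 * fps_X - 3 * fps_X^2) * ncells_gf = (1 - fps_X) * count_gf - 1"
proof -
  let ?R = "1 - fps_X - 2 * fps_X^2 * count_gf"
  have "?R * ncells_gf = fps_X^2 * count_gf * (count_gf + fps_X * fps_deriv count_gf)"
    using ncells_gf_eq by algebra
  then have "?R * ((1 - 2 * fps_X - 3 * fps_X^2) * ncells_gf - ((1 - fps_X) * count_gf - 1)) = 0"
    using count_gf_eq count_gf_deriv by algebra
  then show ?thesis using count_gf_discriminant_root_nonzero by simp
qed

lemma row_sum_gf_closed_form: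
  "(1 - 2 * fps_X - 3 * fps_X^2)^2 * row_sum_gf
     = 1 - 2 * fps_X - fps_X^2 - (1 - 3 * fps_X + 2 * fps_X^3) * count_gf"
proof -
  let ?R = "1 - fps_X - 2 * fps_X^2 * count_gf"
  have "?R * row_sum_gf = fps_X^2 * ncells_gf * count_gf"
    using row_sum_gf_eq by algebra
  then have "?R * ((1 - 2 * fps_X - 3 * fps_X^2)^2 * row_sum_gf
      - (1 - 2 * fps_X - fps_X^2 - (1 - 3 * fps_X + 2 * fps_X^3) * count_gf)) = 0"
    using count_gf_eq ncells_gf_closed_form by algebra
  then show ?thesis using count_gf_discriminant_root_nonzero by simp
qed

lemma double_size_gf_closed_form:
  "(1 - 2 * fps_X - 3 * fps_X^2)^3 * double_size_gf = 2 * fps_X^2 * (1 - fps_X - 2 * fps_X^2 * count_gf)"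
proof -
  define x :: "int fps" where "x = fps_X"
  define G N Q F where "G = count_gf" and "N = ncells_gf" and "Q = row_sum_gf" and "F = double_size_gf"
  define R d where "R = 1 - x - 2 * x^2 * G" and "d = 1 - 2 * x - 3 * x^2"
  define G' where "G' = fps_deriv G"
  have hG: "G = 1 + x * G + x^2 * G^2" and RR: "R^2 = d" and RG': "R * G' = G + 2 * x * G^2"
    and dN: "d * N = (1 - x) * G - 1"
    and dQ: "d^2 * Q = 1 - 2 * x - x^2 - (1 - 3 * x + 2 * x^3) * G"
    using count_gf_eq count_gf_discriminant count_gf_deriv ncells_gf_closed_form row_sum_gf_closed_form
    unfolding x_def G_def N_def Q_def R_def d_def G'_def by simp_all
  have RF: "R * F = 2 * x * (Q + N) + 2 * x^2 * (2 * Q * (2 * G + x * G') + N * (4 * G + x * G')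
      + G * (G + x * G') - N^2)"
    using double_size_gf_eq unfolding x_def G_def N_def Q_def F_def R_def G'_def by algebra
  have "d^2 * (d^3 * F) = d^4 * R^2 * F" unfolding RR by algebra
  also have "\<dots> = d^4 * R * (R * F)" by algebra
  also have "\<dots> = 2 * x * (R * (d^2 * Q) * d^2 + R * d^3 * (d * N))
      + 2 * x^2 * (2 * (d^2 * Q) * d^2 * (2 * G * R + x * (R * G')) + (d * N) * d^3 * (4 * G * R + x * (R * G'))
      + d^4 * G * (G * R + x * (R * G')) - R * d^2 * (d * N)^2)"
    unfolding RF by algebra
  also have "\<dots> = d^2 * (2 * x^2 * R)"
    unfolding dQ dN RG' using hG unfolding R_def d_def by algebra
  finally have "d^2 * (d^3 * F) = d^2 * (2 * x^2 * R)" .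
  moreover have "d \<noteq> 0" unfolding d_def x_def by (rule fps_nonzeroI[of _ 0]) simp
  ultimately have "d^3 * F = 2 * x^2 * R" by (metis mult_left_cancel power_not_zero)
  then show ?thesis unfolding x_def F_def R_def d_def G_def .
qed

lemma fps_ode_of_closed_form:
  fixes R F :: "int fps"
  assumes "R^2 = 1 - 2 * fps_X - 3 * fps_X^2"
    and "(1 - 2 * fps_X - 3 * fps_X^2)^3 * F = 2 * fps_X^2 * R"
  shows "fps_X * (1 - 2 * fps_X - 3 * fps_X^2) * fps_deriv F = (2 + fps_X + 9 * fps_X^2) * F"
proof -
  define x :: "int fps" where "x = fps_X"
  define d where "d = 1 - 2 * x - 3 * x^2"
  have RR: "R^2 = d" and dF: "d^3 * F = 2 * x^2 * R" using assms unfolding x_def d_def .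
  have "d \<noteq> 0" unfolding d_def x_def by (rule fps_nonzeroI[of _ 0]) simp
  have "fps_deriv (R^2) = fps_deriv d" using RR by simp
  then have "2 * (R * fps_deriv R) = 2 * (- (1 + 3 * x))"
    by (simp add: d_def x_def fps_deriv_power algebra_simps power2_eq_square)
  moreover have "(2 :: int fps) \<noteq> 0" by (rule fps_nonzeroI[of _ 0]) simp
  ultimately have RR': "R * fps_deriv R = - (1 + 3 * x)" by (metis mult_left_cancel)
  have dd: "fps_deriv d = - 2 - 6 * x" by (simp add: d_def x_def fps_deriv_power power2_eq_square)
  have "fps_deriv (d^3 * F) = fps_deriv (2 * x^2 * R)" using dF by simp
  then have dF': "3 * d^2 * fps_deriv d * F + d^3 * fps_deriv F = 4 * x * R + 2 * x^2 * fps_deriv R"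
    by (simp add: x_def fps_deriv_power algebra_simps power2_eq_square numeral_3_eq_3)
  have "d^4 * (x * d * fps_deriv F) = x * d^2 * (4 * x * R + 2 * x^2 * fps_deriv R) - 3 * x * d * fps_deriv d * (d^3 * F)"
    using dF' by algebra
  also have "\<dots> = x * d * (4 * x * R * d + 2 * x^2 * R * (R * fps_deriv R)) - 3 * x * d * fps_deriv d * (2 * x^2 * R)"
    by (simp only: dF, simp only: RR[symmetric], algebra)
  also have "\<dots> = d^4 * ((2 + x + 9 * x^2) * F)"
    unfolding RR' dd using dF unfolding d_def by algebra
  finally have "d^4 * (x * d * fps_deriv F) = d^4 * ((2 + x + 9 * x^2) * F)" .
  then show ?thesis using \<open>d \<noteq> 0\<close> unfolding x_def d_def by (simp add: mult.assoc)
qed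

lemma fps_ode_coeff_recurrence:
  fixes F :: "int fps"
  assumes ode: "fps_X * (1 - 2 * fps_X - 3 * fps_X^2) * fps_deriv F = (2 + fps_X + 9 * fps_X^2) * F"
    and "3 \<le> n"
  shows "(2 - int n) * fps_nth F n + (2 * int n - 1) * fps_nth F (n - 1) + (3 * int n + 3) * fps_nth F (n - 2) = 0"
proof -
  define k where "k = n - 3"
  have n: "n = Suc (Suc (Suc k))" using \<open>3 \<le> n\<close> unfolding k_def by simp
  have "fps_X * fps_deriv F - fps_const 2 * (fps_X^2 * fps_deriv F) - fps_const 3 * (fps_X^3 * fps_deriv F)
      = fps_const 2 * F + fps_X * F + fps_const 9 * (fps_X^2 * F)"
    using ode unfolding fps_numeral_fps_const[symmetric] by algebra
  then have "fps_nth (fps_X * fps_deriv F - fps_const 2 * (fps_X^2 * fps_deriv F) - fps_const 3 * (fps_X^3 * fps_deriv F)) n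
      = fps_nth (fps_const 2 * F + fps_X * F + fps_const 9 * (fps_X^2 * F)) n" by simp
  then have "int n * fps_nth F n - 2 * (int (n - 1) * fps_nth F (n - 1)) - 3 * (int (n - 2) * fps_nth F (n - 2))
      = 2 * fps_nth F n + fps_nth F (n - 1) + 9 * fps_nth F (n - 2)"
    unfolding n by (simp add: fps_X_power_mult_nth del: of_nat_Suc)
  then show ?thesis using n by (simp add: algebra_simps)
qed

lemma double_size_gf_ode:
  "fps_X * (1 - 2 * fps_X - 3 * fps_X^2) * fps_deriv double_size_gf = (2 + fps_X + 9 * fps_X^2) * double_size_gf"
  by (rule fps_ode_of_closed_form[OF count_gf_discriminant double_size_gf_closed_form])

theorem mainTheorem13:
  fixes s :: nat
  assumes "s \<ge> 3"
  shows "(2 - int s) * int (h s) + (2 * int s - 1) * int (h (s - 1))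
           + (3 * int s + 3) * int (h (s - 2)) = 0"
proof -
  have coeff: "fps_nth double_size_gf n = 2 * int (h n)" if "0 < n" for n
    using double_h_eq_sum_double_size[OF that] by (simp add: double_size_gf_def path_gf_def)
  have "2 * ((2 - int s) * int (h s) + (2 * int s - 1) * int (h (s - 1)) + (3 * int s + 3) * int (h (s - 2)))
      = (2 - int s) * fps_nth double_size_gf s + (2 * int s - 1) * fps_nth double_size_gf (s - 1)
        + (3 * int s + 3) * fps_nth double_size_gf (s - 2)"
    using assms by (simp add: coeff algebra_simps)
  also have "\<dots> = 0" by (rule fps_ode_coeff_recurrence[OF double_size_gf_ode assms])
  finally show ?thesis by simp
qed

end
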